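(* Let $\alpha_1,\dots,\alpha_n$ be real numbers and $\omega\in S_n$ with $\alpha_{\omega(1)}\le\alpha_{\omega(2)}\le\dots\le\alpha_{\omega(n)}$. Fix $k\in\{1,\dots,n-1\}$ with $\alpha_{\omega(k)}<\alpha_{\omega(k+1)}$ and let $b,c$ be real numbers with $\alpha_{\omega(k)}<c<b<\alpha_{\omega(k+1)}$ and $f(b)=f(c)$, where $f(t)=(t-\alpha_1)\cdots(t-\alpha_n)$. Put $B_j=\frac{b-\alpha_j}{c-\alpha_j}$ for $j=1,\dots,n$. Then $$B_{\omega(k+1)}\le B_{\omega(k+2)}\le\dots\le B_{\omega(n)}<1<B_{\omega(1)}\le B_{\omega(2)}\le\dots\le B_{\omega(k)}.$$ *)

theory Defs
  imports "HOL-Analysis.Analysis" "HOL-Combinatorics.Permutations"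
begin

end

theory Submission
  imports Defs
begin

text \<open>Since \<open>(b - t) / (c - t) = 1 + (b - c) / (c - t)\<close>, the map \<open>t \<mapsto> (b - t) / (c - t)\<close> is
  increasing on each side of its pole \<open>c\<close>, exceeds \<open>1\<close> left of \<open>c\<close> and stays below \<open>1\<close> right of
  \<open>c\<close>. The roots \<open>\<alpha> (\<omega> 1)\<close>, \<dots>, \<open>\<alpha> (\<omega> k)\<close> lie left of \<open>c\<close> and the remaining ones right of \<open>b\<close>, which
  gives the claimed chain.\<close>

lemma ratio_eq_one_plus:
  fixes b c t :: real
  assumes "t \<noteq> c"
  shows "(b - t) / (c - t) = 1 + (b - c) / (c - t)"
  using assms by (simp add: field_simps)

lemma ratio_mono_below_pole:
  fixes b c x y :: real
  assumes "x \<le> y" "y < c" "c < b"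
  shows "(b - x) / (c - x) \<le> (b - y) / (c - y)"
proof -
  have "(b - c) / (c - x) \<le> (b - c) / (c - y)"
    using assms by (intro divide_left_mono) auto
  then show ?thesis
    using assms by (simp add: ratio_eq_one_plus)
qed

lemma ratio_mono_above_pole:
  fixes b c x y :: real
  assumes "x \<le> y" "c < x" "c < b"
  shows "(b - x) / (c - x) \<le> (b - y) / (c - y)"
proof -
  have "(b - c) / (y - c) \<le> (b - c) / (x - c)"
    using assms by (intro divide_left_mono) auto
  then have "(b - c) / (c - x) \<le> (b - c) / (c - y)"
    by (metis minus_diff_eq divide_minus_right neg_le_iff_le)
  then show ?thesis
    using assms by (simp add: ratio_eq_one_plus)
qed

lemma ratio_gt_one_below_pole:
  fixes b c t :: real
  assumes "t < c" "c < b"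
  shows "1 < (b - t) / (c - t)"
  using assms by (simp add: less_divide_eq)

lemma ratio_lt_one_above_pole:
  fixes b c t :: real
  assumes "c < t" "c < b"
  shows "(b - t) / (c - t) < 1"
  using assms by (simp add: divide_less_eq)

theorem lemma8p1:
  fixes \<alpha> :: "nat \<Rightarrow> real" and \<omega> :: "nat \<Rightarrow> nat" and n k :: nat and b c :: real
    and f :: "real \<Rightarrow> real" and B :: "nat \<Rightarrow> real"
  assumes perm: "\<omega> permutes {1..n}"
    and sorted: "\<And>i j. 1 \<le> i \<Longrightarrow> i \<le> j \<Longrightarrow> j \<le> n \<Longrightarrow> \<alpha> (\<omega> i) \<le> \<alpha> (\<omega> j)"
    and k: "1 \<le> k" "k \<le> n - 1"
    and gap: "\<alpha> (\<omega> k) < \<alpha> (\<omega> (k+1))"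
    and cb: "\<alpha> (\<omega> k) < c" "c < b" "b < \<alpha> (\<omega> (k+1))"
    and f_def: "f = (\<lambda>t. \<Prod>j=1..n. (t - \<alpha> j))"
    and fbc: "f b = f c"
    and B_def: "B = (\<lambda>j. (b - \<alpha> j) / (c - \<alpha> j))"
  shows "(\<forall>i j. k + 1 \<le> i \<longrightarrow> i \<le> j \<longrightarrow> j \<le> n \<longrightarrow> B (\<omega> i) \<le> B (\<omega> j))
       \<and> B (\<omega> n) < 1 \<and> 1 < B (\<omega> 1)
       \<and> (\<forall>i j. 1 \<le> i \<longrightarrow> i \<le> j \<longrightarrow> j \<le> k \<longrightarrow> B (\<omega> i) \<le> B (\<omega> j))"
proof -
  have below: "\<alpha> (\<omega> i) < c" if "1 \<le> i" "i \<le> k" for i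
    using sorted[of i k] that k cb by linarith
  have above: "c < \<alpha> (\<omega> i)" if "k + 1 \<le> i" "i \<le> n" for i
    using sorted[of "k + 1" i] that k cb by linarith
  have "B (\<omega> i) \<le> B (\<omega> j)" if "k + 1 \<le> i" "i \<le> j" "j \<le> n" for i j
    unfolding B_def using ratio_mono_above_pole[OF sorted[of i j] above[of i]] that cb k by simp
  moreover have "B (\<omega> n) < 1"
    unfolding B_def using ratio_lt_one_above_pole[OF above[of n]] k cb by simp
  moreover have "1 < B (\<omega> 1)"
    unfolding B_def using ratio_gt_one_below_pole[OF below[of 1]] k cb by simp
  moreover have "B (\<omega> i) \<le> B (\<omega> j)" if "1 \<le> i" "i \<le> j" "j \<le> k" for i j
    unfolding B_def using ratio_mono_below_pole[OF sorted[of i j] below[of j]] that cb k by simp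
  ultimately show ?thesis
    by blast
qed

end
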